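(* Let $G$ be a group, let $A=\bigoplus_{g\in G}A_g$ and $B=\bigoplus_{g\in G}B_g$ be $G$-graded rings, and let $\phi\colon A\to B$ be a surjective ring homomorphism with $\phi(A_g)\subseteq B_g$ for all $g\in G$. If $A$ is epsilon-strongly $G$-graded, then $B$ is epsilon-strongly $G$-graded.
   Context: Rings are associative, not necessarily unital; $XY$ denotes finite sums of products. A $G$-grading: $S=\bigoplus_gS_g$, $S_gS_h\subseteq S_{gh}$. The grading is epsilon-strong if $S_gS_{g^{-1}}S_g=S_g$ for all $g$ and each ring $S_gS_{g^{-1}}$ has a multiplicative identity element. *)

theory Defs
  imports "HOL-Algebra.Group"
begin

text \<open>Rings are the HOL type class ring: associative, not necessarily unital.
  The product XY of two subsets is the set of finite sums of products x*y.\<close>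

definition set_prod :: "'a::ring set \<Rightarrow> 'a set \<Rightarrow> 'a set" where
  "set_prod X Y = {sum_list (map (\<lambda>(x, y). x * y) ps) | ps. set ps \<subseteq> X \<times> Y}"

definition graded_ring :: "('g, 'm) monoid_scheme \<Rightarrow> ('g \<Rightarrow> 'a::ring set) \<Rightarrow> bool" where
  "graded_ring G S \<longleftrightarrow>
     (\<forall>g\<in>carrier G. 0 \<in> S g \<and> (\<forall>x\<in>S g. \<forall>y\<in>S g. x + y \<in> S g \<and> - x \<in> S g)) \<and>
     (\<forall>g\<in>carrier G. \<forall>h\<in>carrier G. \<forall>x\<in>S g. \<forall>y\<in>S h. x * y \<in> S (g \<otimes>\<^bsub>G\<^esub> h)) \<and>
     (\<forall>x::'a. \<exists>!f. finite {g. f g \<noteq> 0} \<and> (\<forall>g. g \<notin> carrier G \<longrightarrow> f g = 0) \<and>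
                   (\<forall>g\<in>carrier G. f g \<in> S g) \<and> x = sum f {g. f g \<noteq> 0})"

definition has_identity :: "'a::ring set \<Rightarrow> bool" where
  "has_identity R \<longleftrightarrow> (\<exists>e\<in>R. \<forall>x\<in>R. e * x = x \<and> x * e = x)"

definition epsilon_strong :: "('g, 'm) monoid_scheme \<Rightarrow> ('g \<Rightarrow> 'a::ring set) \<Rightarrow> bool" where
  "epsilon_strong G S \<longleftrightarrow>
     (\<forall>g\<in>carrier G.
        set_prod (set_prod (S g) (S (inv\<^bsub>G\<^esub> g))) (S g) = S g \<and>
        has_identity (set_prod (S g) (S (inv\<^bsub>G\<^esub> g))))"

definition ring_hom_nu :: "('a::ring \<Rightarrow> 'b::ring) \<Rightarrow> bool" where
  "ring_hom_nu \<phi> \<longleftrightarrow> (\<forall>x y. \<phi> (x + y) = \<phi> x + \<phi> y \<and> \<phi> (x * y) = \<phi> x * \<phi> y)"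

end

theory Submission
  imports Defs
begin

text \<open>A graded surjection maps each component A g onto B g: the preimage a of a homogeneous
  b \<in> B g decomposes as a sum of homogeneous a h, whose images form a decomposition of b,
  so by uniqueness of decompositions in B only the term \<phi> (a g) = b survives. Since a
  homomorphism maps XY onto \<phi> X \<phi> Y and identities to identities of the image, both
  conditions of epsilon-strongness pass from A to B.\<close>

lemma ring_hom_nu_add: "ring_hom_nu \<phi> \<Longrightarrow> \<phi> (x + y) = \<phi> x + \<phi> y"
  and ring_hom_nu_mult: "ring_hom_nu \<phi> \<Longrightarrow> \<phi> (x * y) = \<phi> x * \<phi> y"
  by (simp_all add: ring_hom_nu_def)

lemma ring_hom_nu_zero: "ring_hom_nu \<phi> \<Longrightarrow> \<phi> 0 = 0"
  using ring_hom_nu_add[of \<phi> 0 0] by simp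

lemma ring_hom_nu_sum_list:
  "ring_hom_nu \<phi> \<Longrightarrow> \<phi> (sum_list xs) = sum_list (map \<phi> xs)"
  by (induction xs) (simp_all add: ring_hom_nu_zero ring_hom_nu_add)

lemma ring_hom_nu_sum: "ring_hom_nu \<phi> \<Longrightarrow> \<phi> (sum f A) = (\<Sum>a\<in>A. \<phi> (f a))"
  by (induction A rule: infinite_finite_induct) (simp_all add: ring_hom_nu_zero ring_hom_nu_add)

lemma set_prod_eq_image:
  "set_prod X Y = (\<lambda>ps. sum_list (map (\<lambda>(x, y). x * y) ps)) ` lists (X \<times> Y)"
  by (auto simp: set_prod_def)

lemma image_set_prod:
  assumes "ring_hom_nu \<phi>"
  shows "\<phi> ` set_prod X Y = set_prod (\<phi> ` X) (\<phi> ` Y)"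
proof -
  have "\<phi> (sum_list (map (\<lambda>(x, y). x * y) ps))
      = sum_list (map (\<lambda>(x, y). x * y) (map (map_prod \<phi> \<phi>) ps))" for ps
    using assms by (simp add: ring_hom_nu_sum_list ring_hom_nu_mult case_prod_unfold comp_def)
  then have "\<phi> ` set_prod X Y
      = (\<lambda>ps. sum_list (map (\<lambda>(x, y). x * y) ps)) ` map (map_prod \<phi> \<phi>) ` lists (X \<times> Y)"
    unfolding set_prod_eq_image image_image by simp
  also have "\<dots> = set_prod (\<phi> ` X) (\<phi> ` Y)"
    by (simp only: set_prod_eq_image lists_image map_prod_surj_on[OF refl refl, symmetric])
  finally show ?thesis .
qed

lemma has_identity_image:
  assumes "ring_hom_nu \<phi>" and "has_identity R"
  shows "has_identity (\<phi> ` R)"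
proof -
  obtain e where "e \<in> R" and e: "\<forall>x\<in>R. e * x = x \<and> x * e = x"
    using assms(2) unfolding has_identity_def by blast
  have "\<phi> e * \<phi> x = \<phi> x \<and> \<phi> x * \<phi> e = \<phi> x" if "x \<in> R" for x
    using that e by (simp add: ring_hom_nu_mult[OF assms(1), symmetric])
  with \<open>e \<in> R\<close> show ?thesis
    unfolding has_identity_def by blast
qed

definition homogeneous_decomposition ::
    "('g, 'm) monoid_scheme \<Rightarrow> ('g \<Rightarrow> 'a::ring set) \<Rightarrow> 'a \<Rightarrow> ('g \<Rightarrow> 'a) \<Rightarrow> bool" where
  "homogeneous_decomposition G S x f \<longleftrightarrow>
     finite {g. f g \<noteq> 0} \<and> (\<forall>g. g \<notin> carrier G \<longrightarrow> f g = 0) \<and>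
     (\<forall>g\<in>carrier G. f g \<in> S g) \<and> x = sum f {g. f g \<noteq> 0}"

lemma graded_ring_ex1_decomposition:
  "graded_ring G S \<Longrightarrow> \<exists>!f. homogeneous_decomposition G S x f"
  unfolding graded_ring_def homogeneous_decomposition_def by (elim conjE) (erule spec)

lemma graded_ring_zero_in_component:
  "graded_ring G S \<Longrightarrow> g \<in> carrier G \<Longrightarrow> 0 \<in> S g"
  unfolding graded_ring_def by blast

lemma homogeneous_decomposition_single:
  assumes "graded_ring G S" and "g \<in> carrier G" and "x \<in> S g"
  shows "homogeneous_decomposition G S x (\<lambda>h. if h = g then x else 0)"
proof -
  have "{h. (if h = g then x else 0) \<noteq> 0} \<subseteq> {g}" by auto
  moreover have "x = (\<Sum>h | (if h = g then x else 0) \<noteq> 0. if h = g then x else 0)"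
    by (cases "x = 0") auto
  ultimately show ?thesis
    using assms graded_ring_zero_in_component[OF assms(1)]
    unfolding homogeneous_decomposition_def by (auto intro: finite_subset)
qed

lemma homogeneous_decomposition_image:
  assumes hom: "ring_hom_nu \<phi>" and graded: "\<forall>g\<in>carrier G. \<phi> ` SA g \<subseteq> SB g"
    and dec: "homogeneous_decomposition G SA a f"
  shows "homogeneous_decomposition G SB (\<phi> a) (\<phi> \<circ> f)"
proof -
  have fin: "finite {g. f g \<noteq> 0}" and a: "a = sum f {g. f g \<noteq> 0}"
    using dec unfolding homogeneous_decomposition_def by blast+
  have supp: "{g. \<phi> (f g) \<noteq> 0} \<subseteq> {g. f g \<noteq> 0}"
    using ring_hom_nu_zero[OF hom] by auto
  have "\<phi> a = (\<Sum>g | f g \<noteq> 0. \<phi> (f g))"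
    unfolding a by (rule ring_hom_nu_sum[OF hom])
  also have "\<dots> = (\<Sum>g | \<phi> (f g) \<noteq> 0. \<phi> (f g))"
    by (rule sum.mono_neutral_right[OF fin supp]) auto
  finally show ?thesis
    using dec graded finite_subset[OF supp fin] ring_hom_nu_zero[OF hom]
    unfolding homogeneous_decomposition_def by (auto simp: image_subset_iff)
qed

lemma image_graded_component:
  assumes "graded_ring G SA" and "graded_ring G SB" and hom: "ring_hom_nu \<phi>" and "surj \<phi>"
    and graded: "\<forall>g\<in>carrier G. \<phi> ` SA g \<subseteq> SB g" and g: "g \<in> carrier G"
  shows "\<phi> ` SA g = SB g"
proof
  show "SB g \<subseteq> \<phi> ` SA g"
  proof
    fix b assume b: "b \<in> SB g"
    obtain a where a: "b = \<phi> a" using \<open>surj \<phi>\<close> by (metis surjD)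
    obtain f where f: "homogeneous_decomposition G SA a f"
      using graded_ring_ex1_decomposition[OF assms(1)] by blast
    have "\<phi> \<circ> f = (\<lambda>h. if h = g then b else 0)"
      using graded_ring_ex1_decomposition[OF assms(2), of b]
        homogeneous_decomposition_image[OF hom graded f, folded a]
        homogeneous_decomposition_single[OF assms(2) g b]
      by blast
    then have "b = \<phi> (f g)" by (metis comp_apply)
    moreover have "f g \<in> SA g" using f g unfolding homogeneous_decomposition_def by blast
    ultimately show "b \<in> \<phi> ` SA g" by blast
  qed
qed (use graded g in blast)

theorem lemma3p10:
  fixes G :: "('g, 'm) monoid_scheme"
    and SA :: "'g \<Rightarrow> 'a::ring set"
    and SB :: "'g \<Rightarrow> 'b::ring set"
    and \<phi> :: "'a \<Rightarrow> 'b"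
  assumes "group G"
    and "graded_ring G SA"
    and "graded_ring G SB"
    and "ring_hom_nu \<phi>"
    and "surj \<phi>"
    and "\<forall>g\<in>carrier G. \<phi> ` SA g \<subseteq> SB g"
    and "epsilon_strong G SA"
  shows "epsilon_strong G SB"
  unfolding epsilon_strong_def
proof
  fix g assume g: "g \<in> carrier G"
  then have "inv\<^bsub>G\<^esub> g \<in> carrier G" using \<open>group G\<close> by (rule group.inv_closed[rotated])
  with g have components: "SB g = \<phi> ` SA g" "SB (inv\<^bsub>G\<^esub> g) = \<phi> ` SA (inv\<^bsub>G\<^esub> g)"
    using image_graded_component[OF assms(2-6)] by auto
  have "set_prod (set_prod (SA g) (SA (inv\<^bsub>G\<^esub> g))) (SA g) = SA g"
    and "has_identity (set_prod (SA g) (SA (inv\<^bsub>G\<^esub> g)))"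
    using \<open>epsilon_strong G SA\<close> g unfolding epsilon_strong_def by auto
  then show "set_prod (set_prod (SB g) (SB (inv\<^bsub>G\<^esub> g))) (SB g) = SB g \<and>
      has_identity (set_prod (SB g) (SB (inv\<^bsub>G\<^esub> g)))"
    unfolding components image_set_prod[OF \<open>ring_hom_nu \<phi>\<close>, symmetric]
    using has_identity_image[OF \<open>ring_hom_nu \<phi>\<close>] by simp
qed

end
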